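(* Let $D$ be an oriented graph whose missing graph is a vertex-disjoint union of paths, and let $\Delta$ be its dependency digraph. Let $abc$ and $xyz$ be two distinct connected components of the missing graph, each a path with edges $ab,bc$ and $xy,yz$ respectively, such that $d^+_\Delta(ab)=d^+_\Delta(bc)=2$ and $d^-_\Delta(xy)=d^-_\Delta(yz)=2$. If $ab$ loses to $xy$, then $ab$ loses to $yz$, $bc$ loses to $xy$, and $bc$ loses to $yz$.
   Context: All digraphs are finite oriented graphs. $N^+(v)$ is the out-neighborhood; $N^{++}(v)$ is the set of vertices $w\notin N^+(v)\cup\{v\}$ with $u\to w$ for some $u\in N^+(v)$. A missing edge is a pair of distinct non-adjacent vertices; the missing graph is formed by the missing edges. For missing edges $\{x,y\},\{a,b\}$, $\{x,y\}$ loses to $\{a,b\}$ if the endpoints can be labelled so that $x\to a$, $b\notin N^+(x)\cup N^{++}(x)$, $y\to b$, $a\notin N^+(y)\cup N^{++}(y)$. The dependency digraph $\Delta$ has the missing edges as vertices and arcs $(e,e')$ whenever $e$ loses to $e'$. *)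

theory Defs
  imports Main
begin

definition oriented_graph :: "'a set \<Rightarrow> ('a \<times> 'a) set \<Rightarrow> bool" where
  "oriented_graph V A \<longleftrightarrow> finite V \<and> A \<subseteq> V \<times> V \<and>
     (\<forall>x. (x, x) \<notin> A) \<and> (\<forall>x y. (x, y) \<in> A \<longrightarrow> (y, x) \<notin> A)"

definition out_nbhd :: "('a \<times> 'a) set \<Rightarrow> 'a \<Rightarrow> 'a set" where
  "out_nbhd A v = {w. (v, w) \<in> A}"

definition second_out_nbhd :: "('a \<times> 'a) set \<Rightarrow> 'a \<Rightarrow> 'a set" where
  "second_out_nbhd A v =
     {w. w \<notin> out_nbhd A v \<and> w \<noteq> v \<and> (\<exists>u \<in> out_nbhd A v. (u, w) \<in> A)}"

definition missing_edge :: "'a set \<Rightarrow> ('a \<times> 'a) set \<Rightarrow> 'a set \<Rightarrow> bool" where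
  "missing_edge V A e \<longleftrightarrow> (\<exists>x y. e = {x, y} \<and> x \<in> V \<and> y \<in> V \<and> x \<noteq> y \<and>
      (x, y) \<notin> A \<and> (y, x) \<notin> A)"

definition missing_nbrs :: "'a set \<Rightarrow> ('a \<times> 'a) set \<Rightarrow> 'a \<Rightarrow> 'a set" where
  "missing_nbrs V A v = {w. missing_edge V A {v, w}}"

definition missing_cycle :: "'a set \<Rightarrow> ('a \<times> 'a) set \<Rightarrow> 'a list \<Rightarrow> bool" where
  "missing_cycle V A vs \<longleftrightarrow> length vs \<ge> 3 \<and> distinct vs \<and>
     (\<forall>i < length vs - 1. missing_edge V A {vs ! i, vs ! Suc i}) \<and>
     missing_edge V A {last vs, hd vs}"

definition missing_graph_union_of_paths :: "'a set \<Rightarrow> ('a \<times> 'a) set \<Rightarrow> bool" where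
  "missing_graph_union_of_paths V A \<longleftrightarrow>
     (\<forall>v \<in> V. card (missing_nbrs V A v) \<le> 2) \<and> (\<forall>vs. \<not> missing_cycle V A vs)"

definition loses_to :: "'a set \<Rightarrow> ('a \<times> 'a) set \<Rightarrow> 'a set \<Rightarrow> 'a set \<Rightarrow> bool" where
  "loses_to V A e f \<longleftrightarrow> missing_edge V A e \<and> missing_edge V A f \<and>
     (\<exists>x y a b. e = {x, y} \<and> f = {a, b} \<and>
        (x, a) \<in> A \<and> b \<notin> out_nbhd A x \<union> second_out_nbhd A x \<and>
        (y, b) \<in> A \<and> a \<notin> out_nbhd A y \<union> second_out_nbhd A y)"

text \<open>Degrees in the dependency digraph Delta (vertices: missing edges, arcs: loses_to).\<close>
definition dep_outdeg :: "'a set \<Rightarrow> ('a \<times> 'a) set \<Rightarrow> 'a set \<Rightarrow> nat" where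
  "dep_outdeg V A e = card {f. loses_to V A e f}"

definition dep_indeg :: "'a set \<Rightarrow> ('a \<times> 'a) set \<Rightarrow> 'a set \<Rightarrow> nat" where
  "dep_indeg V A e = card {f. loses_to V A f e}"

definition path3_component :: "'a set \<Rightarrow> ('a \<times> 'a) set \<Rightarrow> 'a \<Rightarrow> 'a \<Rightarrow> 'a \<Rightarrow> bool" where
  "path3_component V A a b c \<longleftrightarrow> a \<noteq> b \<and> b \<noteq> c \<and> a \<noteq> c \<and>
     missing_nbrs V A a = {b} \<and> missing_nbrs V A b = {a, c} \<and> missing_nbrs V A c = {b}"

end

theory Submission
  imports Defs
begin

text \<open>If a missing edge loses to two missing edges, or two missing edges lose to the same one,
  then the two edges on the common side contain a non-adjacent pair of vertices: an arc between
  them would put one endpoint into the first or second out-neighbourhood of a vertex that the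
  definition of losing keeps it out of. The missing-graph neighbourhood of a vertex of the path
  component \<open>abc\<close> (resp. \<open>xyz\<close>) lies inside that component, so the second out-neighbour of \<open>ab\<close> in
  \<open>\<Delta>\<close> must be \<open>yz\<close>, and the second in-neighbour of \<open>xy\<close> and of \<open>yz\<close> must be \<open>bc\<close>.\<close>

definition loses_to_labelled :: "('a \<times> 'a) set \<Rightarrow> 'a \<Rightarrow> 'a \<Rightarrow> 'a \<Rightarrow> 'a \<Rightarrow> bool" where
  "loses_to_labelled A x y a b \<longleftrightarrow>
     (x, a) \<in> A \<and> b \<notin> out_nbhd A x \<union> second_out_nbhd A x \<and>
     (y, b) \<in> A \<and> a \<notin> out_nbhd A y \<union> second_out_nbhd A y"

lemma loses_to_labelled_swap:
  "loses_to_labelled A x y a b \<longleftrightarrow> loses_to_labelled A y x b a"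
  unfolding loses_to_labelled_def by blast

lemma missing_edge_iff:
  "missing_edge V A {u, v} \<longleftrightarrow> u \<in> V \<and> v \<in> V \<and> u \<noteq> v \<and> (u, v) \<notin> A \<and> (v, u) \<notin> A"
  unfolding missing_edge_def by (auto simp: doubleton_eq_iff)

lemma missing_edgeE:
  assumes "missing_edge V A e"
  obtains u v where "e = {u, v}" "u \<in> V" "v \<in> V" "u \<noteq> v" "(u, v) \<notin> A" "(v, u) \<notin> A"
  using assms unfolding missing_edge_def by blast

lemma loses_to_missing_edges:
  "loses_to V A e f \<Longrightarrow> missing_edge V A e \<and> missing_edge V A f"
  unfolding loses_to_def by blast

lemma loses_toE:
  assumes "loses_to V A {u, v} f"
  obtains a b where "f = {a, b}" "loses_to_labelled A u v a b"
proof -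
  obtain x y a b where "{u, v} = {x, y}" "f = {a, b}" "loses_to_labelled A x y a b"
    using assms unfolding loses_to_def loses_to_labelled_def by blast
  then show ?thesis
    using that loses_to_labelled_swap[of A x y a b] by (auto simp: doubleton_eq_iff insert_commute)
qed

lemma labelled_same_source_nonadjacent:
  assumes "(u, v) \<notin> A" "(v, u) \<notin> A"
    and "loses_to_labelled A u v p q" "loses_to_labelled A u v p' q'"
  shows "p \<noteq> q' \<and> (p, q') \<notin> A \<and> (q', p) \<notin> A"
proof -
  have "(u, p) \<in> A" and "(v, q') \<in> A"
    using assms(3,4) unfolding loses_to_labelled_def by blast+
  have "p \<noteq> q'" and "(p, q') \<notin> A"
    using assms(2,4) \<open>(u, p) \<in> A\<close>
    unfolding loses_to_labelled_def out_nbhd_def second_out_nbhd_def by blast+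
  moreover have "(q', p) \<notin> A"
    using assms(1,3) \<open>(v, q') \<in> A\<close>
    unfolding loses_to_labelled_def out_nbhd_def second_out_nbhd_def by blast
  ultimately show ?thesis by blast
qed

lemma labelled_same_target_nonadjacent:
  assumes "(p, q) \<notin> A" "(q, p) \<notin> A"
    and "loses_to_labelled A u v p q" "loses_to_labelled A u' v' p q"
  shows "u \<noteq> v' \<and> (u, v') \<notin> A \<and> (v', u) \<notin> A"
proof -
  have "(u, p) \<in> A" and "(v', q) \<in> A"
    using assms(3,4) unfolding loses_to_labelled_def by blast+
  have "u \<noteq> v'" and "(v', u) \<notin> A"
    using assms(2,4) \<open>(u, p) \<in> A\<close>
    unfolding loses_to_labelled_def out_nbhd_def second_out_nbhd_def by blast+
  moreover have "(u, v') \<notin> A"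
    using assms(1,3) \<open>(v', q) \<in> A\<close>
    unfolding loses_to_labelled_def out_nbhd_def second_out_nbhd_def by blast
  ultimately show ?thesis by blast
qed

lemma loses_to_same_source_missing_edge_between:
  assumes "loses_to V A e f" "loses_to V A e g"
  shows "\<exists>s\<in>f. \<exists>t\<in>g. missing_edge V A {s, t}"
proof -
  obtain u v where e: "e = {u, v}" "(u, v) \<notin> A" "(v, u) \<notin> A"
    using loses_to_missing_edges[OF assms(1)] missing_edgeE by metis
  obtain p q where f: "f = {p, q}" "loses_to_labelled A u v p q"
    using assms(1) e(1) loses_toE by metis
  obtain p' q' where g: "g = {p', q'}" "loses_to_labelled A u v p' q'"
    using assms(2) e(1) loses_toE by metis
  have "p \<in> V" "q' \<in> V"
    using loses_to_missing_edges[OF assms(1)] loses_to_missing_edges[OF assms(2)] f(1) g(1)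
    by (auto simp: missing_edge_iff)
  then have "missing_edge V A {p, q'}"
    using labelled_same_source_nonadjacent[OF e(2,3) f(2) g(2)] by (simp add: missing_edge_iff)
  then show ?thesis using f(1) g(1) by blast
qed

lemma loses_to_same_target_missing_edge_between:
  assumes "loses_to V A e f" "loses_to V A g f"
  shows "\<exists>s\<in>e. \<exists>t\<in>g. missing_edge V A {s, t}"
proof -
  obtain u v where e: "e = {u, v}"
    using loses_to_missing_edges[OF assms(1)] missing_edgeE by metis
  obtain p q where f: "f = {p, q}" "loses_to_labelled A u v p q" "(p, q) \<notin> A" "(q, p) \<notin> A"
    using assms(1) e loses_toE loses_to_missing_edges[OF assms(1)] missing_edge_iff by metis
  obtain u' v' where g: "g = {u', v'}"
    using loses_to_missing_edges[OF assms(2)] missing_edgeE by metis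
  obtain a b where "f = {a, b}" "loses_to_labelled A u' v' a b"
    using assms(2) g loses_toE by metis
  then obtain u'' v'' where g': "g = {u'', v''}" "loses_to_labelled A u'' v'' p q"
    using f(1) g loses_to_labelled_swap[of A u' v' a b]
    by (auto simp: doubleton_eq_iff insert_commute)
  have "u \<in> V" "v'' \<in> V"
    using loses_to_missing_edges[OF assms(1)] loses_to_missing_edges[OF assms(2)] e g'(1)
    by (auto simp: missing_edge_iff)
  then have "missing_edge V A {u, v''}"
    using labelled_same_target_nonadjacent[OF f(3,4,2) g'(2)] by (simp add: missing_edge_iff)
  then show ?thesis using e g'(1) by blast
qed

lemma path3_component_missing_edge:
  assumes "path3_component V A a b c" "missing_edge V A f" "f \<inter> {a, b, c} \<noteq> {}"
  shows "f = {a, b} \<or> f = {b, c}"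
proof -
  obtain s t where "f = {s, t}" and st: "missing_edge V A {s, t}" "missing_edge V A {t, s}"
    using assms(2) by (metis insert_commute missing_edgeE)
  then have "t \<in> missing_nbrs V A s" "s \<in> missing_nbrs V A t"
    unfolding missing_nbrs_def by auto
  then show ?thesis
    using assms(1,3) \<open>f = {s, t}\<close> unfolding path3_component_def by (auto simp: insert_commute)
qed

lemma card_2_obtain_other:
  assumes "card S = 2" "x \<in> S"
  obtains y where "y \<in> S" "y \<noteq> x"
  using assms by (auto simp: card_2_iff)

lemma dep_outdeg_2_loses_to_path3_component:
  assumes "path3_component V A x y z" "dep_outdeg V A e = 2" "loses_to V A e {x, y}"
  shows "loses_to V A e {y, z}"
proof -
  obtain g where g: "loses_to V A e g" "g \<noteq> {x, y}"
    using card_2_obtain_other[of "{f. loses_to V A e f}" "{x, y}"] assms(2,3)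
    unfolding dep_outdeg_def by auto
  obtain s t where "s \<in> {x, y}" "t \<in> g" "missing_edge V A {s, t}"
    using loses_to_same_source_missing_edge_between[OF assms(3) g(1)] by blast
  then have "t \<in> {x, y, z}"
    using path3_component_missing_edge[OF assms(1)] by blast
  then have "g = {y, z}"
    using path3_component_missing_edge[OF assms(1)] loses_to_missing_edges[OF g(1)] g(2) \<open>t \<in> g\<close>
    by blast
  then show ?thesis using g(1) by simp
qed

lemma dep_indeg_2_loses_from_path3_component:
  assumes "path3_component V A a b c" "dep_indeg V A f = 2" "loses_to V A {a, b} f"
  shows "loses_to V A {b, c} f"
proof -
  obtain g where g: "loses_to V A g f" "g \<noteq> {a, b}"
    using card_2_obtain_other[of "{e. loses_to V A e f}" "{a, b}"] assms(2,3)
    unfolding dep_indeg_def by auto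
  obtain s t where "s \<in> {a, b}" "t \<in> g" "missing_edge V A {s, t}"
    using loses_to_same_target_missing_edge_between[OF assms(3) g(1)] by blast
  then have "t \<in> {a, b, c}"
    using path3_component_missing_edge[OF assms(1)] by blast
  then have "g = {b, c}"
    using path3_component_missing_edge[OF assms(1)] loses_to_missing_edges[OF g(1)] g(2) \<open>t \<in> g\<close>
    by blast
  then show ?thesis using g(1) by simp
qed

theorem lemma4p3:
  fixes V :: "'a set" and A :: "('a \<times> 'a) set" and a b c x y z :: 'a
  assumes "oriented_graph V A"
    and "missing_graph_union_of_paths V A"
    and "path3_component V A a b c"
    and "path3_component V A x y z"
    and "{a, b, c} \<noteq> {x, y, z}"
    and "dep_outdeg V A {a, b} = 2" and "dep_outdeg V A {b, c} = 2"
    and "dep_indeg V A {x, y} = 2" and "dep_indeg V A {y, z} = 2"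
    and "loses_to V A {a, b} {x, y}"
  shows "loses_to V A {a, b} {y, z} \<and> loses_to V A {b, c} {x, y} \<and> loses_to V A {b, c} {y, z}"
proof -
  have ab_yz: "loses_to V A {a, b} {y, z}"
    using dep_outdeg_2_loses_to_path3_component[OF assms(4,6,10)] .
  have "loses_to V A {b, c} {x, y}"
    using dep_indeg_2_loses_from_path3_component[OF assms(3,8,10)] .
  moreover have "loses_to V A {b, c} {y, z}"
    using dep_indeg_2_loses_from_path3_component[OF assms(3,9) ab_yz] .
  ultimately show ?thesis using ab_yz by blast
qed

end
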